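(* Let $(X,Y)$ be a random pair with $X\in\mathcal{X}\subset\mathbb{R}^d$ and $Y\in\{0,1\}$. Let $\hat f_0,\hat f_1$ be estimates of the class-conditional densities of $X\mid(Y=0)$ and $X\mid(Y=1)$, and let $\hat\pi_0,\hat\pi_1=1-\hat\pi_0$ be estimates of the class priors, and define $$\hat\eta(X)=\frac{\hat f_1(X)\hat\pi_1}{\hat f_0(X)\hat\pi_0+\hat f_1(X)\hat\pi_1}.$$ Let $\hat\phi_{\mathrm{NP}}(X)=\mathbb{1}(\hat\eta(X)>t_{\mathrm{NP}})$ be a level-$\alpha$ NP classifier with threshold $0\le t_{\mathrm{NP}}\le 1$. Assign the type I error cost $$c_0=c_0(t_{\mathrm{NP}},\hat\pi_0)=\frac{t_{\mathrm{NP}}\hat\pi_0}{(1-t_{\mathrm{NP}})(1-\hat\pi_0)+t_{\mathrm{NP}}\hat\pi_0},\qquad c_1=1-c_0,$$ and define the rebalanced score $$\tilde\eta(X)=\frac{\hat f_1(X)c_1}{\hat f_0(X)c_0+\hat f_1(X)c_1}.$$ Then the rebalancing cost-sensitive classifier $\hat\phi^{\mathrm r}_{\mathrm{CS}}(X)=\mathbb{1}(\tilde\eta(X)>1/2)$ coincides with $\hat\phi_{\mathrm{NP}}(X)$ for all $X$. That is, $R_0(\hat\phi^{\mathrm r}_{\mathrm{CS}})\le\alpha$ with high probability.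
   Context: For a classifier $\phi:\mathcal{X}\to\{0,1\}$, the population type I error is $R_0(\phi)=\mathbb{P}(\phi(X)=1\mid Y=0)$ and the type II error is $R_1(\phi)=\mathbb{P}(\phi(X)=0\mid Y=1)$. In the rebalancing cost-sensitive approach, the misclassification costs $c_0$ (of type I error) and $c_1$ (of type II error), normalized so that $c_0+c_1=1$, replace the estimated class priors in the plug-in posterior. A level-$\alpha$ NP (Neyman–Pearson) classifier is a data-dependent classifier whose population type I error satisfies $R_0\le\alpha$ with high probability (i.e., with probability at least $1-\delta$ for a prespecified violation rate $\delta$), here obtained by thresholding the score $\hat\eta$ at a data-selected threshold $t_{\mathrm{NP}}$ (an order statistic of scores on a left-out class-0 sample). *)

theory Defs
  imports "HOL-Analysis.Analysis"
begin

definition eta_hat :: "('x \<Rightarrow> real) \<Rightarrow> ('x \<Rightarrow> real) \<Rightarrow> real \<Rightarrow> 'x \<Rightarrow> real" where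
  "eta_hat f0 f1 pi0 x = f1 x * (1 - pi0) / (f0 x * pi0 + f1 x * (1 - pi0))"

definition cost0 :: "real \<Rightarrow> real \<Rightarrow> real" where
  "cost0 t pi0 = t * pi0 / ((1 - t) * (1 - pi0) + t * pi0)"

definition eta_tilde :: "('x \<Rightarrow> real) \<Rightarrow> ('x \<Rightarrow> real) \<Rightarrow> real \<Rightarrow> real \<Rightarrow> 'x \<Rightarrow> real" where
  "eta_tilde f0 f1 t pi0 x =
     (let c0 = cost0 t pi0; c1 = 1 - c0 in f1 x * c1 / (f0 x * c0 + f1 x * c1))"

definition phi_NP :: "('x \<Rightarrow> real) \<Rightarrow> ('x \<Rightarrow> real) \<Rightarrow> real \<Rightarrow> real \<Rightarrow> 'x \<Rightarrow> nat" where
  "phi_NP f0 f1 pi0 t x = of_bool (eta_hat f0 f1 pi0 x > t)"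

definition phi_CS_r :: "('x \<Rightarrow> real) \<Rightarrow> ('x \<Rightarrow> real) \<Rightarrow> real \<Rightarrow> real \<Rightarrow> 'x \<Rightarrow> nat" where
  "phi_CS_r f0 f1 pi0 t x = of_bool (eta_tilde f0 f1 t pi0 x > 1/2)"

end

theory Submission
  imports Defs
begin

text \<open>Both classifiers reduce to the same linear comparison between the two weighted
  densities: with \<open>D = (1 - t)(1 - \<pi>\<^sub>0) + t \<pi>\<^sub>0 > 0\<close> the costs are
  \<open>c\<^sub>0 = t \<pi>\<^sub>0 / D\<close> and \<open>c\<^sub>1 = (1 - t)(1 - \<pi>\<^sub>0) / D\<close>, so both \<open>\<tilde>\<eta>(x) > 1/2\<close> and
  \<open>\<hat>\<eta>(x) > t\<close> are equivalent to \<open>t \<pi>\<^sub>0 f\<^sub>0(x) < (1 - t)(1 - \<pi>\<^sub>0) f\<^sub>1(x)\<close>.\<close>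

text \<open>The degenerate case \<open>x + y = 0\<close> is included: there \<open>y / (x + y) = 0\<close> and both sides fail.\<close>

lemma ratio_gt_iff:
  fixes x y s :: real
  assumes "x \<ge> 0" "y \<ge> 0" "s \<ge> 0"
  shows "y / (x + y) > s \<longleftrightarrow> s * x < (1 - s) * y"
proof (cases "x + y = 0")
  case True
  then have "x = 0" "y = 0" using assms by linarith+
  then show ?thesis using assms by simp
next
  case False
  then have "x + y > 0" using assms by linarith
  then show ?thesis by (simp add: field_simps)
qed

lemma cost0_denominator_pos:
  fixes t p :: real
  assumes "0 < p" "p < 1" "0 \<le> t" "t \<le> 1"
  shows "(1 - t) * (1 - p) + t * p > 0"
proof (cases "t = 0")
  case True
  then show ?thesis using assms by simp
next
  case False
  then have "t * p > 0" using assms by simp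
  moreover have "(1 - t) * (1 - p) \<ge> 0" using assms by simp
  ultimately show ?thesis by linarith
qed

lemma one_minus_cost0:
  fixes t p :: real
  assumes "0 < p" "p < 1" "0 \<le> t" "t \<le> 1"
  shows "1 - cost0 t p = (1 - t) * (1 - p) / ((1 - t) * (1 - p) + t * p)"
  using cost0_denominator_pos[OF assms] by (simp add: cost0_def field_simps)

lemma eta_hat_gt_iff:
  assumes "f0 x \<ge> 0" "f1 x \<ge> 0" "0 \<le> pi0" "pi0 \<le> 1" "0 \<le> t"
  shows "eta_hat f0 f1 pi0 x > t \<longleftrightarrow> t * (f0 x * pi0) < (1 - t) * (f1 x * (1 - pi0))"
  unfolding eta_hat_def using assms by (intro ratio_gt_iff) auto

lemma eta_tilde_gt_half_iff:
  assumes "f0 x \<ge> 0" "f1 x \<ge> 0" "0 < pi0" "pi0 < 1" "0 \<le> t" "t \<le> 1"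
  shows "eta_tilde f0 f1 t pi0 x > 1/2 \<longleftrightarrow> t * (f0 x * pi0) < (1 - t) * (f1 x * (1 - pi0))"
proof -
  define D where "D = (1 - t) * (1 - pi0) + t * pi0"
  have D: "D > 0" unfolding D_def using cost0_denominator_pos assms by blast
  have c0: "cost0 t pi0 = t * pi0 / D" by (simp add: cost0_def D_def)
  have c1: "1 - cost0 t pi0 = (1 - t) * (1 - pi0) / D"
    unfolding D_def using one_minus_cost0 assms by blast
  have "cost0 t pi0 \<ge> 0" unfolding c0 using D assms by simp
  moreover have "1 - cost0 t pi0 \<ge> 0" unfolding c1 using D assms by simp
  ultimately have "eta_tilde f0 f1 t pi0 x > 1/2 \<longleftrightarrow>
        1/2 * (f0 x * cost0 t pi0) < (1 - 1/2) * (f1 x * (1 - cost0 t pi0))"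
    unfolding eta_tilde_def Let_def using assms by (intro ratio_gt_iff) auto
  also have "\<dots> \<longleftrightarrow> t * (f0 x * pi0) < (1 - t) * (f1 x * (1 - pi0))"
    unfolding c1 unfolding c0 using D by (simp add: field_simps)
  finally show ?thesis .
qed

theorem proposition2:
  fixes \<X> :: "(real ^ 'd) set"
    and f0 f1 :: "real ^ 'd \<Rightarrow> real"
    and pi0 t :: real
  assumes f0_nonneg: "\<And>x. x \<in> \<X> \<Longrightarrow> f0 x \<ge> 0"
    and f1_nonneg: "\<And>x. x \<in> \<X> \<Longrightarrow> f1 x \<ge> 0"
    and pi0: "0 < pi0" "pi0 < 1"
    and t: "0 \<le> t" "t \<le> 1"
  shows "\<forall>x \<in> \<X>. phi_CS_r f0 f1 pi0 t x = phi_NP f0 f1 pi0 t x"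
proof
  fix x assume "x \<in> \<X>"
  then have "f0 x \<ge> 0" "f1 x \<ge> 0" using f0_nonneg f1_nonneg by auto
  then show "phi_CS_r f0 f1 pi0 t x = phi_NP f0 f1 pi0 t x"
    unfolding phi_CS_r_def phi_NP_def
    using eta_tilde_gt_half_iff[of f0 x f1] eta_hat_gt_iff[of f0 x f1] pi0 t by simp
qed

end
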